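(* Let $a=(p_a,Rd_a,Wt_a)\in\mathsf{Lab}$ and $\beta\in\mathsf{Lab}\uplus\underline{\mathsf{Lab}}$ with $\mathsf{und}(\beta)=(p_\beta,Rd_\beta,Wt_\beta)$, and assume $Wt_a\subseteq Rd_a$ and $Wt_\beta\subseteq Rd_\beta$. Suppose $A\to_{ann}^{a}A'$ and $A\to_{ann}^{\beta}A''$ with $a\;\iota_{lab}\;\beta$. Then there is an annotation DAG $A'''$ such that $A''\to_{ann}^{a}A'''$ and $\mathsf{diff}(A\to_{ann}^{a}A')=\mathsf{diff}(A''\to_{ann}^{a}A''')$.
   Context: Fix a set $\mathcal{R}$ of memory resources. Let $\mathsf{PID}=(\mathbb{N}_+)^*$ be the set of finite words over the positive integers, with $\preceq$ the prefix order. An annotation DAG is a triple $A=(V,E_R,E_W)$ such that: (1) $V\subseteq(\mathsf{PID}\times\mathbb{N})\cup\{\bot\}$ is finite, $\bot\in V$, and $(p,n)\in V$ implies $(p,n')\in V$ for all $n'\le n$; (2) $E_R,E_W\subseteq V\times\mathcal{R}\times V$, and $(v',r,v),(v'',r,v)\in E_R\cup E_W$ implies $v'=v''$; (3) $E_R\cap E_W=\varnothing$ and the directed graph $(V,E_R\cup E_W)$ is acyclic; (4) if $(v',r,v)\in E_W$ and $v'\neq\bot$ then $(v'',r,v')\in E_W$ for some $v''$; (5) $(v,r,v'),(v,r,v'')\in E_W$ implies $v'=v''$. For $r\in\mathcal{R}$, $\mathsf{last}(r,E_W)$ is $\bot$ if $E_W$ has no edge labelled $r$, and otherwise is the final node of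 the unique path from $\bot$ consisting of all $E_W$-edges labelled $r$. For $p\in\mathsf{PID}$, $\mathsf{max}_p(V)=\max\{n:(p,n)\in V\}$, or $-1$ if there is no such $n$. Let $\mathsf{Lab}=\mathsf{PID}\times2^{\mathcal{R}}\times2^{\mathcal{R}}$ and $\underline{\mathsf{Lab}}=\{\underline{a}:a\in\mathsf{Lab}\}$ a disjoint copy; $\mathsf{und}(a)=\mathsf{und}(\underline a)=a$. For $a=(p,Rd,Wt)\in\mathsf{Lab}$ and annotation DAGs $A_1=(V_1,E_{R1},E_{W1})$, $A_2=(V_2,E_{R2},E_{W2})$, write $A_1\to_{ann}^{a}A_2$ iff, with $v=(p,\mathsf{max}_p(V_1)+1)$ and $\mathsf{newedge}(r,E_W,v)=(\mathsf{last}(r,E_W),r,v)$: $V_2=V_1\cup\{v\}$, $E_{R2}=E_{R1}\cup\{\mathsf{newedge}(r,E_{W1},v): r\in Rd\setminus Wt\}$, $E_{W2}=E_{W1}\cup\{\mathsf{newedge}(r,E_{W1},v): r\in Wt\}$; and write $A_2\to_{ann}^{\underline a}A_1$ iff $A_1\to_{ann}^{a}A_2$. For $\alpha,\beta\in\mathsf{Lab}\uplus\underline{\mathsf{Lab}}$ with $\mathsf{und}(\alpha)=(p_1,Rd_1,Wt_1)$, $\mathsf{und}(\beta)=(p_2,Rd_2,Wt_2)$, define $\alpha\;\iota_{lab}\;\beta$ iff $p_1\not\preceq p_2$, $p_2\not\preceq p_1$, $Rd_1\cap Wt_2=\varnothing$ and $Rd_2\cap Wt_1=\varnothing$. For $o:(V,E_R,E_W)\to_{ann}^{\alpha}(V',E'_R,E'_W)$,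 $\mathsf{diff}(o)=(V'\setminus V,E'_R\setminus E_R,E'_W\setminus E_W)$ if $\alpha\in\mathsf{Lab}$ and $\mathsf{diff}(o)=(V\setminus V',E_R\setminus E'_R,E_W\setminus E'_W)$ if $\alpha\in\underline{\mathsf{Lab}}$. (In the paper, labels arise from basic blocks for which the set of written resources is contained in the set of read resources; this is recorded here as the hypothesis $Wt\subseteq Rd$.) *)

theory Defs
  imports Main "HOL-Library.Sublist"
begin

definition is_pid :: "nat list \<Rightarrow> bool" where
  "is_pid p \<longleftrightarrow> (\<forall>x\<in>set p. 0 < x)"

datatype node = Bot | Nd "nat list" nat

type_synonym 'r edge = "node \<times> 'r \<times> node"
type_synonym 'r ann = "node set \<times> 'r edge set \<times> 'r edge set"

definition edge_rel :: "'r edge set \<Rightarrow> (node \<times> node) set" where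
  "edge_rel E = {(u, v). \<exists>r. (u, r, v) \<in> E}"

definition ann_dag :: "'r ann \<Rightarrow> bool" where
  "ann_dag A \<longleftrightarrow> (case A of (V, ER, EW) \<Rightarrow>
     finite V \<and> Bot \<in> V \<and>
     (\<forall>p n. Nd p n \<in> V \<longrightarrow> is_pid p \<and> (\<forall>n'\<le>n. Nd p n' \<in> V)) \<and>
     (\<forall>(u, r, v)\<in>ER \<union> EW. u \<in> V \<and> v \<in> V) \<and>
     (\<forall>v' v'' r v. (v', r, v) \<in> ER \<union> EW \<and> (v'', r, v) \<in> ER \<union> EW \<longrightarrow> v' = v'') \<and>
     ER \<inter> EW = {} \<and> acyclic (edge_rel (ER \<union> EW)) \<and>
     (\<forall>v' r v. (v', r, v) \<in> EW \<and> v' \<noteq> Bot \<longrightarrow> (\<exists>v''. (v'', r, v') \<in> EW)) \<and>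
     (\<forall>v r v' v''. (v, r, v') \<in> EW \<and> (v, r, v'') \<in> EW \<longrightarrow> v' = v''))"

text \<open>last(r, E_W): final node of the unique path from Bot consisting of all
  E_W-edges labelled r (Bot if there are none).\<close>
definition last_node :: "'r \<Rightarrow> 'r edge set \<Rightarrow> node" where
  "last_node r EW = (if \<not> (\<exists>u v. (u, r, v) \<in> EW) then Bot
     else (THE v. \<exists>xs. xs \<noteq> [] \<and> hd xs = Bot \<and> last xs = v \<and>
        {(xs ! i, r, xs ! Suc i) | i. Suc i < length xs} = {e \<in> EW. fst (snd e) = r}))"

definition maxp :: "node set \<Rightarrow> nat list \<Rightarrow> int" where
  "maxp V p = (if \<exists>n. Nd p n \<in> V then int (Max {n. Nd p n \<in> V}) else -1)"

definition newedge :: "'r \<Rightarrow> 'r edge set \<Rightarrow> node \<Rightarrow> 'r edge" where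
  "newedge r EW v = (last_node r EW, r, v)"

type_synonym 'r lab = "nat list \<times> 'r set \<times> 'r set"

definition ann_step :: "'r ann \<Rightarrow> 'r lab \<Rightarrow> 'r ann \<Rightarrow> bool" where
  "ann_step A1 a A2 \<longleftrightarrow> ann_dag A1 \<and> ann_dag A2 \<and>
     (case A1 of (V1, ER1, EW1) \<Rightarrow> case A2 of (V2, ER2, EW2) \<Rightarrow>
      case a of (p, Rd, Wt) \<Rightarrow>
        (let v = Nd p (nat (maxp V1 p + 1)) in
          V2 = V1 \<union> {v} \<and>
          ER2 = ER1 \<union> {newedge r EW1 v | r. r \<in> Rd - Wt} \<and>
          EW2 = EW1 \<union> {newedge r EW1 v | r. r \<in> Wt}))"

text \<open>Labels and underlined (backward) labels.\<close>
datatype 'r blab = Fw "'r lab" | Bw "'r lab"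

fun und :: "'r blab \<Rightarrow> 'r lab" where
  "und (Fw a) = a" | "und (Bw a) = a"

fun ann_trans :: "'r ann \<Rightarrow> 'r blab \<Rightarrow> 'r ann \<Rightarrow> bool" where
  "ann_trans A (Fw a) A' = ann_step A a A'"
| "ann_trans A (Bw a) A' = ann_step A' a A"

definition iota_lab :: "'r blab \<Rightarrow> 'r blab \<Rightarrow> bool" where
  "iota_lab \<alpha> \<beta> \<longleftrightarrow> (case und \<alpha> of (p1, Rd1, Wt1) \<Rightarrow> case und \<beta> of (p2, Rd2, Wt2) \<Rightarrow>
     \<not> prefix p1 p2 \<and> \<not> prefix p2 p1 \<and> Rd1 \<inter> Wt2 = {} \<and> Rd2 \<inter> Wt1 = {})"

fun ann_diff :: "'r ann \<Rightarrow> 'r blab \<Rightarrow> 'r ann \<Rightarrow> 'r ann" where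
  "ann_diff (V, ER, EW) (Fw a) (V', ER', EW') = (V' - V, ER' - ER, EW' - EW)"
| "ann_diff (V, ER, EW) (Bw a) (V', ER', EW') = (V - V', ER - ER', EW - EW')"

end

(*
  An a-step from an annotation DAG is determined by two pieces of data: the nodes of process p_a,
  which fix the new node, and, for every resource r read by a, the r-labelled write edges, which fix
  last(r, E_W) and hence the new edges. A step by a label independent of a touches neither: its node
  belongs to a process different from p_a, and it writes no resource read by a. So the a-step can be
  replayed after it and adds exactly the same node and edges. The replayed step is defined because
  every annotation step yields an annotation DAG: the new node is a fresh sink, and last(r, E_W) is
  the end of the path formed by the r-write edges.
*)

theory Submission
  imports Defs
begin

lemma ann_dagD:
  assumes "ann_dag (V, ER, EW)"
  shows ann_dag_finite: "finite V"
    and ann_dag_Bot: "Bot \<in> V"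
    and ann_dag_pid: "Nd p n \<in> V \<Longrightarrow> is_pid p"
    and ann_dag_down_closed: "Nd p n \<in> V \<Longrightarrow> m \<le> n \<Longrightarrow> Nd p m \<in> V"
    and ann_dag_source: "(u, r, w) \<in> ER \<union> EW \<Longrightarrow> u \<in> V"
    and ann_dag_target: "(u, r, w) \<in> ER \<union> EW \<Longrightarrow> w \<in> V"
    and ann_dag_pred_unique: "(u, r, w) \<in> ER \<union> EW \<Longrightarrow> (u', r, w) \<in> ER \<union> EW \<Longrightarrow> u = u'"
    and ann_dag_disjoint: "ER \<inter> EW = {}"
    and ann_dag_acyclic: "acyclic (edge_rel (ER \<union> EW))"
    and ann_dag_write_pred: "(u, r, w) \<in> EW \<Longrightarrow> u \<noteq> Bot \<Longrightarrow> \<exists>x. (x, r, u) \<in> EW"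
    and ann_dag_write_succ_unique: "(u, r, w) \<in> EW \<Longrightarrow> (u, r, w') \<in> EW \<Longrightarrow> w = w'"
  using assms unfolding ann_dag_def prod.case by blast+

definition edges_labelled :: "'r \<Rightarrow> 'r edge set \<Rightarrow> 'r edge set" where
  "edges_labelled r E = {e \<in> E. fst (snd e) = r}"

definition path_edges :: "'r \<Rightarrow> node list \<Rightarrow> 'r edge set" where
  "path_edges r xs = {(xs ! i, r, xs ! Suc i) | i. Suc i < length xs}"

lemma last_node_eq_THE:
  "last_node r E = (if edges_labelled r E = {} then Bot
     else (THE v. \<exists>xs. xs \<noteq> [] \<and> hd xs = Bot \<and> last xs = v \<and> path_edges r xs = edges_labelled r E))"
  unfolding last_node_def edges_labelled_def path_edges_def by force

lemma last_node_cong: "edges_labelled r E = edges_labelled r E' \<Longrightarrow> last_node r E = last_node r E'"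
  by (simp add: last_node_eq_THE)

lemma path_edges_image: "path_edges r xs = (\<lambda>i. (xs ! i, r, xs ! Suc i)) ` {i. Suc i < length xs}"
  by (auto simp: path_edges_def)

lemma path_edges_empty_iff: "path_edges r xs = {} \<longleftrightarrow> length xs \<le> 1"
  unfolding path_edges_image by (auto dest: spec[of _ 0])

lemma path_edges_snoc:
  assumes "xs \<noteq> []" shows "path_edges r (xs @ [y]) = insert (last xs, r, y) (path_edges r xs)"
proof -
  have idx: "{i. Suc i < length (xs @ [y])} = insert (length xs - 1) {i. Suc i < length xs}"
    using assms by auto
  have "(xs @ [y]) ! (length xs - 1) = last xs" "(xs @ [y]) ! Suc (length xs - 1) = y"
    using assms by (simp_all add: nth_append last_conv_nth)
  moreover have "(\<lambda>i. ((xs @ [y]) ! i, r, (xs @ [y]) ! Suc i)) ` {i. Suc i < length xs} = path_edges r xs"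
    by (auto simp: path_edges_image nth_append)
  ultimately show ?thesis
    unfolding path_edges_image[of r "xs @ [y]"] idx by (simp add: path_edges_image)
qed

lemma path_edges_trancl:
  assumes "path_edges r xs \<subseteq> S" "i < j" "j < length xs"
  shows "(xs ! i, xs ! j) \<in> (edge_rel S)\<^sup>+"
  using assms(2,3)
proof (induction j)
  case (Suc j)
  have "(xs ! j, xs ! Suc j) \<in> edge_rel S"
    using Suc.prems assms(1) by (auto simp: path_edges_def edge_rel_def)
  then show ?case
    using Suc by (cases "i = j") (auto intro: trancl_into_trancl)
qed simp

lemma path_edges_last_no_outgoing:
  assumes "acyclic (edge_rel (path_edges r xs))"
  shows "(last xs, r, w) \<notin> path_edges r xs"
proof
  assume "(last xs, r, w) \<in> path_edges r xs"
  then obtain i where i: "xs ! i = last xs" "Suc i < length xs"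
    by (auto simp: path_edges_def)
  then have "(xs ! i, xs ! (length xs - 1)) \<in> (edge_rel (path_edges r xs))\<^sup>+"
    by (intro path_edges_trancl) auto
  moreover have "xs ! (length xs - 1) = last xs"
    using i(2) by (intro last_conv_nth[symmetric]) auto
  ultimately show False
    using i(1) assms by (simp add: acyclic_def)
qed

lemma path_edges_last_incoming:
  assumes "2 \<le> length xs" shows "(xs ! (length xs - 2), r, last xs) \<in> path_edges r xs"
proof -
  have "Suc (length xs - 2) = length xs - 1" "xs \<noteq> []"
    using assms by auto
  then show ?thesis
    using assms by (auto simp: path_edges_def last_conv_nth intro!: exI[of _ "length xs - 2"])
qed

lemma path_edges_sink_eq_last:
  assumes "(u, r, v) \<in> path_edges r xs" and "\<forall>w. (v, r, w) \<notin> path_edges r xs"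
  shows "v = last xs"
proof -
  obtain i where i: "v = xs ! Suc i" "Suc i < length xs"
    using assms(1) by (auto simp: path_edges_def)
  have "\<not> Suc (Suc i) < length xs"
    using assms(2) i by (auto simp: path_edges_def)
  with i have "Suc i = length xs - 1" "xs \<noteq> []"
    by auto
  with i show ?thesis
    by (simp add: last_conv_nth)
qed

lemma path_edges_snoc_sink:
  assumes "xs \<noteq> []" "hd xs = Bot" "\<forall>w. (u, r, w) \<notin> path_edges r xs"
    and "u = Bot \<or> (\<exists>x. (x, r, u) \<in> path_edges r xs)"
  shows "path_edges r (xs @ [z]) = insert (u, r, z) (path_edges r xs)"
proof -
  from assms(4) have "u = last xs"
  proof
    assume u: "u = Bot"
    have "length xs \<le> 1"
    proof (rule ccontr)
      assume "\<not> length xs \<le> 1"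
      then have "(xs ! 0, r, xs ! 1) \<in> path_edges r xs"
        by (auto simp: path_edges_def)
      moreover have "xs ! 0 = u"
        using assms(1,2) u by (simp add: hd_conv_nth)
      ultimately show False
        using assms(3) by blast
    qed
    with assms(1,2) u show "u = last xs"
      by (cases xs) auto
  next
    assume "\<exists>x. (x, r, u) \<in> path_edges r xs"
    then obtain x where "(x, r, u) \<in> path_edges r xs"
      by blast
    then show "u = last xs"
      using assms(3) by (rule path_edges_sink_eq_last)
  qed
  with assms(1) show ?thesis
    by (simp add: path_edges_snoc)
qed

lemma finite_acyclic_obtain_sink:
  assumes "finite R" "acyclic R" "R \<noteq> {}"
  obtains u z where "(u, z) \<in> R" "z \<notin> Domain R"
proof -
  have "wf (R\<inverse>)"
    using assms(1,2) by (simp add: finite_acyclic_wf acyclic_converse)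
  moreover have "Range R \<noteq> {}"
    using assms(3) by auto
  ultimately obtain z where z: "z \<in> Range R" "\<And>y. (y, z) \<in> R\<inverse> \<Longrightarrow> y \<notin> Range R"
    by (metis wfE_min ex_in_conv)
  then have "z \<notin> Domain R"
    by blast
  with z that show ?thesis
    by blast
qed

definition write_chain :: "'r \<Rightarrow> 'r edge set \<Rightarrow> bool" where
  "write_chain r S \<longleftrightarrow> finite S \<and> (\<forall>e\<in>S. fst (snd e) = r) \<and> acyclic (edge_rel S) \<and>
     (\<forall>u v. (u, r, v) \<in> S \<and> u \<noteq> Bot \<longrightarrow> (\<exists>x. (x, r, u) \<in> S)) \<and>
     (\<forall>u v w. (u, r, v) \<in> S \<and> (u, r, w) \<in> S \<longrightarrow> v = w)"

lemma write_chain_obtain_sink: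
  assumes "write_chain r S" "S \<noteq> {}"
  obtains u z where "(u, r, z) \<in> S" "\<forall>w. (z, r, w) \<notin> S"
proof -
  have "edge_rel S = (\<lambda>(u, r, v). (u, v)) ` S"
    by (force simp: edge_rel_def)
  then have "finite (edge_rel S)" "acyclic (edge_rel S)" "edge_rel S \<noteq> {}"
    using assms by (auto simp: write_chain_def)
  then obtain u z where "(u, z) \<in> edge_rel S" "z \<notin> Domain (edge_rel S)"
    by (rule finite_acyclic_obtain_sink)
  then obtain r' where e: "(u, r', z) \<in> S" and sink: "\<forall>w r''. (z, r'', w) \<notin> S"
    by (auto simp: edge_rel_def)
  have "r' = r"
    using assms(1) e by (auto simp: write_chain_def)
  with e sink that show ?thesis
    by blast
qed

lemma write_chain_remove_sink:
  assumes "write_chain r S" "(u, r, z) \<in> S" "\<forall>w. (z, r, w) \<notin> S"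
  shows "write_chain r (S - {(u, r, z)})"
proof -
  have "acyclic (edge_rel (S - {(u, r, z)}))"
    using assms(1) by (auto simp: write_chain_def edge_rel_def intro: acyclic_subset)
  with assms show ?thesis
    unfolding write_chain_def by blast
qed

lemma write_chain_has_path:
  assumes "write_chain r S"
  shows "\<exists>xs. xs \<noteq> [] \<and> hd xs = Bot \<and> path_edges r xs = S"
  using assms
proof (induction "card S" arbitrary: S rule: less_induct)
  case less
  show ?case
  proof (cases "S = {}")
    case True
    then show ?thesis
      by (intro exI[of _ "[Bot]"]) (simp add: path_edges_empty_iff)
  next
    case False
    obtain u z where uz: "(u, r, z) \<in> S" and sink: "\<forall>w. (z, r, w) \<notin> S"
      using less.prems False by (rule write_chain_obtain_sink)
    define S' where "S' = S - {(u, r, z)}"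
    have "finite S"
      using less.prems by (simp add: write_chain_def)
    then have "card S' < card S"
      unfolding S'_def using uz by (rule card_Diff1_less)
    moreover have "write_chain r S'"
      unfolding S'_def using less.prems uz sink by (rule write_chain_remove_sink)
    ultimately obtain xs where xs: "xs \<noteq> []" "hd xs = Bot" "path_edges r xs = S'"
      using less.hyps by blast
    have "\<forall>w. (u, r, w) \<notin> path_edges r xs"
      using less.prems uz unfolding xs(3) S'_def write_chain_def by blast
    moreover have "u = Bot \<or> (\<exists>x. (x, r, u) \<in> path_edges r xs)"
    proof -
      have "u \<noteq> z"
        using uz sink by blast
      then show ?thesis
        using less.prems uz unfolding xs(3) S'_def write_chain_def by blast
    qed
    ultimately have "path_edges r (xs @ [z]) = insert (u, r, z) S'"
      using xs by (simp add: path_edges_snoc_sink)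
    also have "\<dots> = S"
      using uz by (auto simp: S'_def)
    finally have "path_edges r (xs @ [z]) = S" .
    with xs show ?thesis
      by (intro exI[of _ "xs @ [z]"]) simp
  qed
qed

lemma write_chain_edges_labelled:
  assumes "ann_dag (V, ER, EW)" shows "write_chain r (edges_labelled r EW)"
proof -
  have "edges_labelled r EW \<subseteq> V \<times> {r} \<times> V"
  proof (clarsimp simp: edges_labelled_def)
    fix u w assume "(u, r, w) \<in> EW"
    then show "u \<in> V \<and> w \<in> V"
      using ann_dag_source[OF assms] ann_dag_target[OF assms] by blast
  qed
  then have "finite (edges_labelled r EW)"
    using ann_dag_finite[OF assms] by (simp add: finite_subset)
  moreover have "acyclic (edge_rel (edges_labelled r EW))"
    using ann_dag_acyclic[OF assms] by (rule acyclic_subset) (auto simp: edges_labelled_def edge_rel_def)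
  ultimately show ?thesis
    using ann_dag_write_pred[OF assms] ann_dag_write_succ_unique[OF assms]
    unfolding write_chain_def edges_labelled_def by auto
qed

(* The THE in last_node is well defined: the last node of every path covering the r-write edges is
   their unique sink. *)
lemma last_node_path:
  assumes "ann_dag (V, ER, EW)"
  obtains xs where "xs \<noteq> []" "hd xs = Bot" "path_edges r xs = edges_labelled r EW"
    "last_node r EW = last xs"
proof -
  define S where "S = edges_labelled r EW"
  have chain: "write_chain r S"
    unfolding S_def using assms by (rule write_chain_edges_labelled)
  obtain xs where xs: "xs \<noteq> []" "hd xs = Bot" "path_edges r xs = S"
    using write_chain_has_path[OF chain] by blast
  have "last_node r EW = last xs"
  proof (cases "S = {}")
    case True
    then have "length xs \<le> 1"
      using xs(3) by (simp add: path_edges_empty_iff)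
    with xs(1,2) have "last xs = Bot"
      by (cases xs) auto
    with True show ?thesis
      by (simp add: last_node_eq_THE S_def)
  next
    case False
    have unique: "last ys = last xs" if ys: "ys \<noteq> []" "path_edges r ys = S" for ys
    proof -
      have "2 \<le> length ys"
        using ys(2) False path_edges_empty_iff[of r ys] by auto
      then have "(ys ! (length ys - 2), r, last ys) \<in> path_edges r xs"
        using path_edges_last_incoming[of ys r] ys(2) xs(3) by simp
      moreover have "acyclic (edge_rel (path_edges r ys))"
        using chain ys(2) by (simp add: write_chain_def)
      then have "\<forall>w. (last ys, r, w) \<notin> path_edges r ys"
        by (simp add: path_edges_last_no_outgoing)
      then have "\<forall>w. (last ys, r, w) \<notin> path_edges r xs"
        using ys(2) xs(3) by simp
      ultimately show "last ys = last xs"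
        by (rule path_edges_sink_eq_last)
    qed
    have "(THE v. \<exists>ys. ys \<noteq> [] \<and> hd ys = Bot \<and> last ys = v \<and> path_edges r ys = S) = last xs"
    proof (rule the_equality)
      show "\<exists>ys. ys \<noteq> [] \<and> hd ys = Bot \<and> last ys = last xs \<and> path_edges r ys = S"
        using xs by blast
    qed (use unique in blast)
    with False show ?thesis
      by (simp add: last_node_eq_THE S_def)
  qed
  then show ?thesis
    using xs by (intro that) (simp_all add: S_def)
qed

lemma last_node_sink:
  assumes "ann_dag (V, ER, EW)"
  shows "last_node r EW = Bot \<or> (\<exists>u. (u, r, last_node r EW) \<in> EW)"
    and "(last_node r EW, r, w) \<notin> EW"
proof -
  obtain xs where xs: "xs \<noteq> []" "hd xs = Bot" "path_edges r xs = edges_labelled r EW"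
    "last_node r EW = last xs"
    using assms by (rule last_node_path)
  show "last_node r EW = Bot \<or> (\<exists>u. (u, r, last_node r EW) \<in> EW)"
  proof (cases "2 \<le> length xs")
    case True
    then show ?thesis
      using xs path_edges_last_incoming[of xs r] by (auto simp: edges_labelled_def)
  next
    case False
    then have "length xs \<le> 1"
      by simp
    with xs show ?thesis
      by (cases xs) auto
  qed
  have "acyclic (edge_rel (path_edges r xs))"
    using write_chain_edges_labelled[OF assms] xs(3) by (simp add: write_chain_def)
  then show "(last_node r EW, r, w) \<notin> EW"
    using xs path_edges_last_no_outgoing by (fastforce simp: edges_labelled_def)
qed

lemma last_node_mem:
  assumes "ann_dag (V, ER, EW)" shows "last_node r EW \<in> V"
proof (cases "last_node r EW = Bot")
  case False
  then obtain u where "(u, r, last_node r EW) \<in> ER \<union> EW"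
    using last_node_sink(1)[OF assms] by blast
  then show ?thesis
    by (rule ann_dag_target[OF assms])
qed (simp add: ann_dag_Bot[OF assms])

definition fresh_node :: "node set \<Rightarrow> nat list \<Rightarrow> node" where
  "fresh_node V p = Nd p (nat (maxp V p + 1))"

definition new_edges :: "'r edge set \<Rightarrow> node \<Rightarrow> 'r set \<Rightarrow> 'r edge set" where
  "new_edges EW v R = {newedge r EW v | r. r \<in> R}"

lemma mem_new_edges: "(u, r, w) \<in> new_edges EW v R \<longleftrightarrow> r \<in> R \<and> u = last_node r EW \<and> w = v"
  by (auto simp: new_edges_def newedge_def)

fun ann_succ :: "'r ann \<Rightarrow> 'r lab \<Rightarrow> 'r ann" where
  "ann_succ (V, ER, EW) (p, Rd, Wt) =
     (V \<union> {fresh_node V p}, ER \<union> new_edges EW (fresh_node V p) (Rd - Wt),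
      EW \<union> new_edges EW (fresh_node V p) Wt)"

lemma ann_step_iff_ann_succ: "ann_step A a A' \<longleftrightarrow> ann_dag A \<and> ann_dag A' \<and> A' = ann_succ A a"
  by (cases A, cases a, cases A')
    (simp add: ann_step_def fresh_node_def new_edges_def Let_def)

lemma maxp_cong: "(\<forall>n. Nd p n \<in> W \<longleftrightarrow> Nd p n \<in> V) \<Longrightarrow> maxp W p = maxp V p"
  by (simp add: maxp_def)

lemma fresh_node_notin:
  assumes "finite V" shows "fresh_node V p \<notin> V"
proof
  assume fresh: "fresh_node V p \<in> V"
  then have "\<exists>n. Nd p n \<in> V"
    by (auto simp: fresh_node_def)
  then have "fresh_node V p = Nd p (Suc (Max {n. Nd p n \<in> V}))"
    by (simp add: fresh_node_def maxp_def)
  with fresh have "Suc (Max {n. Nd p n \<in> V}) \<in> {n. Nd p n \<in> V}"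
    by simp
  moreover have "finite {n. Nd p n \<in> V}"
    using finite_vimageI[OF assms, of "Nd p"] by (simp add: inj_def vimage_def)
  ultimately show False
    using Max_ge Suc_n_not_le_n by blast
qed

lemma below_fresh_node_mem:
  assumes "ann_dag (V, ER, EW)" "n < nat (maxp V p + 1)"
  shows "Nd p n \<in> V"
proof -
  have ex: "\<exists>m. Nd p m \<in> V" and n: "n \<le> Max {m. Nd p m \<in> V}"
    using assms(2) by (auto simp: maxp_def split: if_splits)
  have "finite {m. Nd p m \<in> V}"
    using finite_vimageI[OF ann_dag_finite[OF assms(1)], of "Nd p"] by (simp add: inj_def vimage_def)
  with ex have "Nd p (Max {m. Nd p m \<in> V}) \<in> V"
    using Max_in[of "{m. Nd p m \<in> V}"] by auto
  then show ?thesis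
    using n by (rule ann_dag_down_closed[OF assms(1)])
qed

lemma insert_fresh_node_down_closed:
  assumes "ann_dag (V, ER, EW)" "Nd q n \<in> V \<union> {fresh_node V p}" "m \<le> n"
  shows "Nd q m \<in> V \<union> {fresh_node V p}"
proof (cases "Nd q n = fresh_node V p")
  case True
  then have "q = p" "n = nat (maxp V p + 1)"
    by (simp_all add: fresh_node_def)
  with assms(3) show ?thesis
    using below_fresh_node_mem[OF assms(1)] by (cases "m = n") (auto simp: fresh_node_def)
next
  case False
  with assms show ?thesis
    using ann_dag_down_closed[OF assms(1)] by blast
qed

lemma acyclic_Un_edges_into_fresh:
  assumes "acyclic R" "N \<subseteq> (- {x}) \<times> {x}" "x \<notin> Domain R"
  shows "acyclic (R \<union> N)"
proof -
  have reach: "(a, b) \<in> R\<^sup>+ \<or> b = x" if "(a, b) \<in> (R \<union> N)\<^sup>+" for a b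
    using that
  proof (induction rule: trancl_induct)
    case (base y)
    then show ?case
      using assms(2) by blast
  next
    case (step y z)
    show ?case
    proof (cases "(y, z) \<in> R")
      case True
      then have "y \<noteq> x"
        using assms(3) by blast
      with step.IH have "(a, y) \<in> R\<^sup>+"
        by blast
      with True show ?thesis
        by (blast intro: trancl_into_trancl)
    next
      case False
      with step.hyps(2) assms(2) show ?thesis
        by blast
    qed
  qed
  have "(y, y) \<notin> (R \<union> N)\<^sup>+" for y
  proof
    assume cycle: "(y, y) \<in> (R \<union> N)\<^sup>+"
    have "(y, y) \<notin> R\<^sup>+"
      using assms(1) by (simp add: acyclic_def)
    with reach[OF cycle] have "y = x"
      by blast
    moreover obtain z where "(y, z) \<in> R \<union> N"
      using cycle by (meson converse_tranclE)
    ultimately show False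
      using assms(2,3) by blast
  qed
  then show ?thesis
    by (simp add: acyclic_def)
qed

lemma write_pred_new_edges:
  assumes "ann_dag (V, ER, EW)" "(u, r, w) \<in> EW \<union> new_edges EW v Wt" "u \<noteq> Bot"
  shows "\<exists>x. (x, r, u) \<in> EW \<union> new_edges EW v Wt"
proof (cases "(u, r, w) \<in> EW")
  case True
  with assms(3) show ?thesis
    using ann_dag_write_pred[OF assms(1)] by blast
next
  case False
  with assms(2) have "u = last_node r EW"
    by (simp add: mem_new_edges)
  with assms(3) show ?thesis
    using last_node_sink(1)[OF assms(1)] by auto
qed

lemma write_succ_unique_new_edges:
  assumes "ann_dag (V, ER, EW)" "v \<notin> V"
    and "(u, r, w) \<in> EW \<union> new_edges EW v Wt" "(u, r, w') \<in> EW \<union> new_edges EW v Wt"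
  shows "w = w'"
proof -
  have no_mix: False if "(u, r, x) \<in> EW" "(u, r, y) \<in> new_edges EW v Wt" for x y
    using that last_node_sink(2)[OF assms(1)] by (simp add: mem_new_edges)
  from assms(3,4) consider "(u, r, w) \<in> EW" "(u, r, w') \<in> EW"
    | "(u, r, w) \<in> new_edges EW v Wt" "(u, r, w') \<in> new_edges EW v Wt"
    using no_mix by blast
  then show ?thesis
  proof cases
    case 1
    then show ?thesis
      by (rule ann_dag_write_succ_unique[OF assms(1)])
  qed (simp add: mem_new_edges)
qed

lemma ann_dag_ann_succ:
  assumes dag: "ann_dag (V, ER, EW)" and pid: "is_pid p"
  shows "ann_dag (ann_succ (V, ER, EW) (p, Rd, Wt))"
proof -
  define v where "v = fresh_node V p"
  define NR where "NR = new_edges EW v (Rd - Wt)"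
  define NW where "NW = new_edges EW v Wt"
  have v: "v \<notin> V"
    unfolding v_def using ann_dag_finite[OF dag] by (rule fresh_node_notin)
  have old: "\<And>u r w. (u, r, w) \<in> ER \<union> EW \<Longrightarrow> u \<in> V \<and> w \<in> V"
    using ann_dag_source[OF dag] ann_dag_target[OF dag] by blast
  have new: "\<And>u r w. (u, r, w) \<in> NR \<union> NW \<Longrightarrow> u = last_node r EW \<and> u \<in> V \<and> w = v"
    using last_node_mem[OF dag] by (auto simp: NR_def NW_def mem_new_edges)
  show ?thesis
    unfolding ann_succ.simps v_def[symmetric] NR_def[symmetric] NW_def[symmetric] ann_dag_def prod.case
  proof (intro conjI allI impI ballI)
    show "finite (V \<union> {v})" "Bot \<in> V \<union> {v}"
      using ann_dag_finite[OF dag] ann_dag_Bot[OF dag] by simp_all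
    show "is_pid q" if "Nd q n \<in> V \<union> {v}" for q n
      using that pid ann_dag_pid[OF dag] by (auto simp: v_def fresh_node_def)
    show "Nd q m \<in> V \<union> {v}" if "Nd q n \<in> V \<union> {v}" "m \<le> n" for q n m
      using insert_fresh_node_down_closed[OF dag] that by (simp add: v_def)
    show "case e of (u, r, w) \<Rightarrow> u \<in> V \<union> {v} \<and> w \<in> V \<union> {v}"
      if "e \<in> ER \<union> NR \<union> (EW \<union> NW)" for e
      using that old new by (cases e) blast
    show "u = u'" if "(u, r, w) \<in> ER \<union> NR \<union> (EW \<union> NW) \<and> (u', r, w) \<in> ER \<union> NR \<union> (EW \<union> NW)"
      for u u' r w
    proof (cases "w = v")
      case True
      then have "(u, r, w) \<in> NR \<union> NW" "(u', r, w) \<in> NR \<union> NW"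
        using that old v by blast+
      then show ?thesis
        using new[of u r w] new[of u' r w] by blast
    next
      case False
      then have "(u, r, w) \<in> ER \<union> EW" "(u', r, w) \<in> ER \<union> EW"
        using that new by blast+
      then show ?thesis
        by (rule ann_dag_pred_unique[OF dag])
    qed
    have "NR \<inter> NW = {}"
      by (auto simp: NR_def NW_def new_edges_def newedge_def)
    moreover have "(ER \<union> EW) \<inter> (NR \<union> NW) = {}"
      using old new v by fastforce
    ultimately show "(ER \<union> NR) \<inter> (EW \<union> NW) = {}"
      using ann_dag_disjoint[OF dag] by blast
    have "edge_rel (ER \<union> NR \<union> (EW \<union> NW)) = edge_rel (ER \<union> EW) \<union> edge_rel (NR \<union> NW)"
      by (auto simp: edge_rel_def)
    moreover have "edge_rel (NR \<union> NW) \<subseteq> (- {v}) \<times> {v}" "v \<notin> Domain (edge_rel (ER \<union> EW))"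
      using new old v by (fastforce simp: edge_rel_def)+
    ultimately show "acyclic (edge_rel (ER \<union> NR \<union> (EW \<union> NW)))"
      using ann_dag_acyclic[OF dag] by (simp add: acyclic_Un_edges_into_fresh)
    show "\<exists>x. (x, r, u) \<in> EW \<union> NW" if "(u, r, w) \<in> EW \<union> NW \<and> u \<noteq> Bot" for u r w
      using write_pred_new_edges[OF dag] that unfolding NW_def by blast
    show "w = w'" if "(u, r, w) \<in> EW \<union> NW \<and> (u, r, w') \<in> EW \<union> NW" for u r w w'
      using write_succ_unique_new_edges[OF dag v] that unfolding NW_def by blast
  qed
qed

lemma ann_step_ann_succ:
  assumes "ann_dag A" "is_pid (fst a)" shows "ann_step A a (ann_succ A a)"
  using assms ann_dag_ann_succ by (cases A, cases a) (auto simp: ann_step_iff_ann_succ)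

lemma ann_trans_ann_dag: "ann_trans A \<beta> A' \<Longrightarrow> ann_dag A \<and> ann_dag A'"
  by (cases \<beta>) (auto simp: ann_step_def)

lemma ann_step_other_pid_nodes:
  assumes "ann_step (V, ER, EW) (q, Rd, Wt) (V', ER', EW')" "p \<noteq> q"
  shows "Nd p n \<in> V' \<longleftrightarrow> Nd p n \<in> V"
  using assms by (auto simp: ann_step_iff_ann_succ fresh_node_def)

lemma ann_step_edges_labelled_unwritten:
  assumes "ann_step (V, ER, EW) (q, Rd, Wt) (V', ER', EW')" "r \<notin> Wt"
  shows "edges_labelled r EW' = edges_labelled r EW"
  using assms by (auto simp: ann_step_iff_ann_succ edges_labelled_def mem_new_edges)

lemma ann_trans_other_pid_nodes:
  assumes "ann_trans (V, ER, EW) \<beta> (V', ER', EW')" "und \<beta> = (q, Rd, Wt)" "p \<noteq> q"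
  shows "Nd p n \<in> V' \<longleftrightarrow> Nd p n \<in> V"
proof (cases \<beta>)
  case Fw
  with assms show ?thesis
    using ann_step_other_pid_nodes[of V ER EW q Rd Wt V' ER' EW' p n] by simp
next
  case Bw
  with assms show ?thesis
    using ann_step_other_pid_nodes[of V' ER' EW' q Rd Wt V ER EW p n] by simp
qed

lemma ann_trans_edges_labelled_unwritten:
  assumes "ann_trans (V, ER, EW) \<beta> (V', ER', EW')" "und \<beta> = (q, Rd, Wt)" "r \<notin> Wt"
  shows "edges_labelled r EW' = edges_labelled r EW"
proof (cases \<beta>)
  case Fw
  with assms show ?thesis
    using ann_step_edges_labelled_unwritten[of V ER EW q Rd Wt V' ER' EW' r] by simp
next
  case Bw
  with assms show ?thesis
    using ann_step_edges_labelled_unwritten[of V' ER' EW' q Rd Wt V ER EW r] by simp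
qed

lemma ann_diff_ann_succ:
  assumes "ann_dag (V, ER, EW)"
  shows "ann_diff (V, ER, EW) (Fw (p, Rd, Wt)) (ann_succ (V, ER, EW) (p, Rd, Wt)) =
    ({fresh_node V p}, new_edges EW (fresh_node V p) (Rd - Wt), new_edges EW (fresh_node V p) Wt)"
proof -
  have "fresh_node V p \<notin> V"
    using ann_dag_finite[OF assms] by (rule fresh_node_notin)
  then have "(u, r, fresh_node V p) \<notin> ER \<union> EW" for u r
    using ann_dag_target[OF assms] by blast
  with \<open>fresh_node V p \<notin> V\<close> show ?thesis
    by (auto simp: mem_new_edges)
qed

lemma new_edges_cong:
  assumes "\<forall>r\<in>R. edges_labelled r EW' = edges_labelled r EW"
  shows "new_edges EW' v R = new_edges EW v R"
proof -
  have "last_node r EW' = last_node r EW" if "r \<in> R" for r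
    using that assms by (intro last_node_cong) blast
  then show ?thesis
    unfolding new_edges_def newedge_def by auto
qed

lemma ann_diff_ann_succ_cong:
  assumes "ann_dag (V, ER, EW)" "ann_dag (W, FR, FW)"
    and "\<forall>n. Nd p n \<in> W \<longleftrightarrow> Nd p n \<in> V" "\<forall>r\<in>Rd. edges_labelled r FW = edges_labelled r EW"
    and "Wt \<subseteq> Rd"
  shows "ann_diff (W, FR, FW) (Fw (p, Rd, Wt)) (ann_succ (W, FR, FW) (p, Rd, Wt)) =
    ann_diff (V, ER, EW) (Fw (p, Rd, Wt)) (ann_succ (V, ER, EW) (p, Rd, Wt))"
proof -
  have v: "fresh_node W p = fresh_node V p"
    using maxp_cong[OF assms(3)] by (simp add: fresh_node_def)
  have "new_edges FW (fresh_node V p) (Rd - Wt) = new_edges EW (fresh_node V p) (Rd - Wt)"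
    using assms(4) by (intro new_edges_cong) blast
  moreover have "new_edges FW (fresh_node V p) Wt = new_edges EW (fresh_node V p) Wt"
    using assms(4,5) by (intro new_edges_cong) blast
  ultimately show ?thesis
    unfolding ann_diff_ann_succ[OF assms(1)] ann_diff_ann_succ[OF assms(2)] v by simp
qed

theorem mainTheorem3:
  fixes a :: "'r lab" and \<beta> :: "'r blab" and A A' A'' :: "'r ann"
  assumes "is_pid (fst a)" and "is_pid (fst (und \<beta>))"
    and "snd (snd a) \<subseteq> fst (snd a)"
    and "snd (snd (und \<beta>)) \<subseteq> fst (snd (und \<beta>))"
    and "ann_trans A (Fw a) A'" and "ann_trans A \<beta> A''"
    and "iota_lab (Fw a) \<beta>"
  shows "\<exists>A'''. ann_trans A'' (Fw a) A''' \<and>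
           ann_diff A (Fw a) A' = ann_diff A'' (Fw a) A'''"
proof -
  obtain p Rd Wt where a: "a = (p, Rd, Wt)" by (cases a)
  obtain q Rd\<^sub>\<beta> Wt\<^sub>\<beta> where b: "und \<beta> = (q, Rd\<^sub>\<beta>, Wt\<^sub>\<beta>)" by (cases "und \<beta>")
  obtain V ER EW where A: "A = (V, ER, EW)" by (cases A)
  obtain V'' ER'' EW'' where A'': "A'' = (V'', ER'', EW'')" by (cases A'')
  note step\<^sub>\<beta> = assms(6)[unfolded A A'']
  have indep: "p \<noteq> q" "Rd \<inter> Wt\<^sub>\<beta> = {}"
    using assms(7) by (auto simp: iota_lab_def a b)
  have A': "A' = ann_succ A a" and dag: "ann_dag (V, ER, EW)"
    using assms(5) by (simp_all add: ann_step_iff_ann_succ A)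
  have dag'': "ann_dag (V'', ER'', EW'')"
    using ann_trans_ann_dag[OF step\<^sub>\<beta>] by blast
  have "\<forall>n. Nd p n \<in> V'' \<longleftrightarrow> Nd p n \<in> V"
    using ann_trans_other_pid_nodes[OF step\<^sub>\<beta> b indep(1)] by blast
  moreover have "\<forall>r\<in>Rd. edges_labelled r EW'' = edges_labelled r EW"
    using ann_trans_edges_labelled_unwritten[OF step\<^sub>\<beta> b] indep(2) by (simp add: disjoint_iff)
  moreover have "Wt \<subseteq> Rd"
    using assms(3) by (simp add: a)
  ultimately have diff: "ann_diff A'' (Fw a) (ann_succ A'' a) = ann_diff A (Fw a) A'"
    unfolding A A'' A' a using dag dag'' by (intro ann_diff_ann_succ_cong)
  have step: "ann_trans A'' (Fw a) (ann_succ A'' a)"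
    using ann_step_ann_succ[OF dag''] assms(1) by (simp add: A'')
  show ?thesis
    using step diff[symmetric] by (intro exI conjI)
qed

end
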